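(* Let $X$ be a finite poset and let $f\colon X\to\mathbb R$ be a Morse function satisfying the Exclusion condition. Then the associated set $\mathcal M_f=\{(w,x)\in X\times X: w\prec x,\ f(w)\ge f(x)\}$ is a Morse matching on $X$ whose set of critical points equals the set of critical points of $f$. In particular, if $X$ is a finite two-wide poset and $f\colon X\to\mathbb R$ is any Morse function, then $\mathcal M_f$ is a Morse matching with $\mathrm{crit}(f)=\mathrm{crit}(\mathcal M_f)$.
   Context: In a poset, write $a\prec b$ if $a<b$ and there is no $c$ with $a<c<b$; the Hasse diagram $\mathcal H(X)$ is the directed graph with edges $a\to b$ for $a\prec b$. A Morse function on a finite poset $X$ is a map $f\colon X\to\mathbb R$ such that for every $x\in X$, $\#\{y: x\prec y,\ f(x)\ge f(y)\}\le1$ and $\#\{w: w\prec x,\ f(w)\ge f(x)\}\le 1$; $x$ is critical if both sets are empty, regular otherwise; $\mathrm{crit}(f)$ is the set of critical points. $f$ satisfies the Exclusion condition if for every regular $x$ exactly one of these two sets is nonempty. A matching on $X$ is a set $\mathcal M\subseteq X\times X$ such that $(x,y)\in\mathcal M$ implies $x\prec y$ and each element of $X$ belongs to at most one pair of $\mathcal M$. Let $\mathcal H_{\mathcal M}(X)$ be the directed graph obtained from $\mathcal H(X)$ by reversing the edges not in $\mathcal M$; $\mathcal M$ is a Morse matching if $\mathcal H_{\mathcal M}(X)$ has no directed cycles. The critical points $\mathrm{crit}(\mathcal M)$ are the elements not belonging to any pair of $\mathcal M$. A poset is two-wide if for any $x\prec z\prec y$ there is $z'\neq z$ with $x\prec z'\prec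 y$. *)

theory Defs
  imports Complex_Main
begin

text \<open>A finite poset is modelled as a finite carrier set X inside a type of class order,
  with the induced order. Covering relation within X.\<close>

definition covers :: "'a::order set \<Rightarrow> 'a \<Rightarrow> 'a \<Rightarrow> bool" where
  "covers X a b \<longleftrightarrow> a \<in> X \<and> b \<in> X \<and> a < b \<and> \<not> (\<exists>c\<in>X. a < c \<and> c < b)"

definition hasse :: "'a::order set \<Rightarrow> ('a \<times> 'a) set" where
  "hasse X = {(a, b). covers X a b}"

definition up_low :: "'a::order set \<Rightarrow> ('a \<Rightarrow> real) \<Rightarrow> 'a \<Rightarrow> 'a set" where
  "up_low X f x = {y. covers X x y \<and> f x \<ge> f y}"

definition down_high :: "'a::order set \<Rightarrow> ('a \<Rightarrow> real) \<Rightarrow> 'a \<Rightarrow> 'a set" where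
  "down_high X f x = {w. covers X w x \<and> f w \<ge> f x}"

definition morse_function :: "'a::order set \<Rightarrow> ('a \<Rightarrow> real) \<Rightarrow> bool" where
  "morse_function X f \<longleftrightarrow>
     (\<forall>x\<in>X. card (up_low X f x) \<le> 1 \<and> card (down_high X f x) \<le> 1)"

definition crit_fun :: "'a::order set \<Rightarrow> ('a \<Rightarrow> real) \<Rightarrow> 'a set" where
  "crit_fun X f = {x\<in>X. up_low X f x = {} \<and> down_high X f x = {}}"

definition regular_fun :: "'a::order set \<Rightarrow> ('a \<Rightarrow> real) \<Rightarrow> 'a \<Rightarrow> bool" where
  "regular_fun X f x \<longleftrightarrow> x \<in> X \<and> x \<notin> crit_fun X f"

definition exclusion :: "'a::order set \<Rightarrow> ('a \<Rightarrow> real) \<Rightarrow> bool" where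
  "exclusion X f \<longleftrightarrow>
     (\<forall>x. regular_fun X f x \<longrightarrow> ((up_low X f x \<noteq> {}) \<noteq> (down_high X f x \<noteq> {})))"

definition matching :: "'a::order set \<Rightarrow> ('a \<times> 'a) set \<Rightarrow> bool" where
  "matching X M \<longleftrightarrow>
     (\<forall>(x, y)\<in>M. covers X x y) \<and>
     (\<forall>z. card {p\<in>M. fst p = z \<or> snd p = z} \<le> 1)"

definition hasse_M :: "'a::order set \<Rightarrow> ('a \<times> 'a) set \<Rightarrow> ('a \<times> 'a) set" where
  "hasse_M X M = M \<union> {(b, a). (a, b) \<in> hasse X \<and> (a, b) \<notin> M}"

definition morse_matching :: "'a::order set \<Rightarrow> ('a \<times> 'a) set \<Rightarrow> bool" where
  "morse_matching X M \<longleftrightarrow> matching X M \<and> acyclic (hasse_M X M)"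

definition crit_matching :: "'a::order set \<Rightarrow> ('a \<times> 'a) set \<Rightarrow> 'a set" where
  "crit_matching X M = {x\<in>X. \<forall>p\<in>M. fst p \<noteq> x \<and> snd p \<noteq> x}"

definition assoc_matching :: "'a::order set \<Rightarrow> ('a \<Rightarrow> real) \<Rightarrow> ('a \<times> 'a) set" where
  "assoc_matching X f = {(w, x). covers X w x \<and> f w \<ge> f x}"

definition two_wide :: "'a::order set \<Rightarrow> bool" where
  "two_wide X \<longleftrightarrow>
     (\<forall>x z y. covers X x z \<and> covers X z y \<longrightarrow> (\<exists>z'. z' \<noteq> z \<and> covers X x z' \<and> covers X z' y))"

end

theory Submission
  imports Defs
begin

text \<open>Along every edge of the modified Hasse diagram of \<open>\<M>\<^sub>f\<close> the value of \<open>f\<close> weakly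
  decreases, and it stays constant only on matched edges, which go upwards in the order; so the
  pair \<open>(f, \<le>)\<close> strictly decreases lexicographically along paths and there are no cycles.
  Exclusion makes every point incident to at most one matched pair, so \<open>\<M>\<^sub>f\<close> is a matching.
  In a two-wide poset Exclusion is automatic: if \<open>w \<prec> x \<prec> y\<close> with \<open>f w \<ge> f x \<ge> f y\<close>, a second
  chain \<open>w \<prec> z \<prec> y\<close> exists, and the Morse condition at \<open>w\<close> and at \<open>y\<close> forces
  \<open>f w < f z < f y\<close>, a contradiction.\<close>

lemma finite_up_low: "finite X \<Longrightarrow> finite (up_low X f x)"
  by (rule finite_subset[of _ X]) (auto simp: up_low_def covers_def)

lemma finite_down_high: "finite X \<Longrightarrow> finite (down_high X f x)"
  by (rule finite_subset[of _ X]) (auto simp: down_high_def covers_def)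

lemma up_low_outside: "x \<notin> X \<Longrightarrow> up_low X f x = {}"
  by (auto simp: up_low_def covers_def)

lemma down_high_outside: "x \<notin> X \<Longrightarrow> down_high X f x = {}"
  by (auto simp: down_high_def covers_def)

lemma card_up_low_le_one:
  "morse_function X f \<Longrightarrow> card (up_low X f x) \<le> 1"
  by (cases "x \<in> X") (auto simp: morse_function_def up_low_outside)

lemma card_down_high_le_one:
  "morse_function X f \<Longrightarrow> card (down_high X f x) \<le> 1"
  by (cases "x \<in> X") (auto simp: morse_function_def down_high_outside)

lemma morse_function_up_low_unique:
  assumes "finite X" "morse_function X f" "y \<in> up_low X f x" "y' \<in> up_low X f x"
  shows "y = y'"
  using assms card_up_low_le_one[OF assms(2), of x]
    card_le_Suc0_iff_eq[OF finite_up_low[OF assms(1)]] by auto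

lemma morse_function_down_high_unique:
  assumes "finite X" "morse_function X f" "w \<in> down_high X f x" "w' \<in> down_high X f x"
  shows "w = w'"
  using assms card_down_high_le_one[OF assms(2), of x]
    card_le_Suc0_iff_eq[OF finite_down_high[OF assms(1)]] by auto

lemma exclusion_not_up_low_and_down_high:
  assumes "exclusion X f"
  shows "up_low X f x = {} \<or> down_high X f x = {}"
proof (cases "x \<in> X")
  case True
  then show ?thesis
    using assms by (auto simp: exclusion_def regular_fun_def crit_fun_def)
qed (simp add: up_low_outside)

lemma assoc_matching_incident:
  "{p \<in> assoc_matching X f. fst p = z \<or> snd p = z}
     = Pair z ` up_low X f z \<union> (\<lambda>w. (w, z)) ` down_high X f z"
  by (auto simp: assoc_matching_def up_low_def down_high_def)

lemma matching_assoc_matching: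
  assumes "finite X" "morse_function X f" "exclusion X f"
  shows "matching X (assoc_matching X f)"
  unfolding matching_def
proof (intro conjI allI)
  show "\<forall>(x, y)\<in>assoc_matching X f. covers X x y"
    by (auto simp: assoc_matching_def)
next
  fix z
  have fin: "finite (up_low X f z)" "finite (down_high X f z)"
    using assms(1) by (simp_all add: finite_up_low finite_down_high)
  consider "up_low X f z = {}" | "down_high X f z = {}"
    using exclusion_not_up_low_and_down_high[OF assms(3)] by blast
  then show "card {p \<in> assoc_matching X f. fst p = z \<or> snd p = z} \<le> 1"
  proof cases
    case 1
    then show ?thesis
      unfolding assoc_matching_incident
      using card_image_le[OF fin(2)] card_down_high_le_one[OF assms(2)]
      by (metis le_trans sup_bot.left_neutral image_empty)
  next
    case 2
    then show ?thesis
      unfolding assoc_matching_incident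
      using card_image_le[OF fin(1)] card_up_low_le_one[OF assms(2)]
      by (metis le_trans sup_bot.right_neutral image_empty)
  qed
qed

lemma hasse_M_assoc_matching_edge:
  "(x, y) \<in> hasse_M X (assoc_matching X f) \<Longrightarrow> f y < f x \<or> (f y \<le> f x \<and> x < y)"
  by (auto simp: hasse_M_def assoc_matching_def hasse_def covers_def)

lemma acyclic_hasse_M_assoc_matching:
  fixes X :: "'a::order set"
  shows "acyclic (hasse_M X (assoc_matching X f))"
proof -
  have "f y < f x \<or> (f y \<le> f x \<and> x < y)"
    if "(x, y) \<in> (hasse_M X (assoc_matching X f))\<^sup>+" for x y
    using that
  proof (induction rule: trancl_induct)
    case (base y)
    then show ?case by (rule hasse_M_assoc_matching_edge)
  next
    case (step y z)
    with hasse_M_assoc_matching_edge[OF step(2)] show ?case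
      by (auto dest: order.strict_trans)
  qed
  then show ?thesis
    unfolding acyclic_def by fastforce
qed

lemma crit_matching_assoc_matching:
  "crit_matching X (assoc_matching X f) = crit_fun X f"
  by (auto simp: crit_matching_def crit_fun_def assoc_matching_def up_low_def down_high_def)

lemma morse_matching_assoc_matching:
  assumes "finite X" "morse_function X f" "exclusion X f"
  shows "morse_matching X (assoc_matching X f)"
  using matching_assoc_matching[OF assms] acyclic_hasse_M_assoc_matching
  by (simp add: morse_matching_def)

lemma two_wide_exclusion:
  assumes fin: "finite X" and tw: "two_wide X" and mf: "morse_function X f"
  shows "exclusion X f"
  unfolding exclusion_def
proof (intro allI impI notI)
  fix x
  assume "regular_fun X f x" and "(up_low X f x \<noteq> {}) = (down_high X f x \<noteq> {})"
  then obtain y w where y: "y \<in> up_low X f x" and w: "w \<in> down_high X f x"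
    by (auto simp: regular_fun_def crit_fun_def)
  then have "covers X w x" "covers X x y"
    by (simp_all add: up_low_def down_high_def)
  then obtain z where "z \<noteq> x" "covers X w z" "covers X z y"
    using tw unfolding two_wide_def by blast
  moreover have "x \<in> up_low X f w" "x \<in> down_high X f y"
    using y w by (simp_all add: up_low_def down_high_def)
  ultimately have "z \<notin> up_low X f w" "z \<notin> down_high X f y"
    using morse_function_up_low_unique[OF fin mf] morse_function_down_high_unique[OF fin mf]
    by blast+
  with \<open>covers X w z\<close> \<open>covers X z y\<close> have "f w < f z" "f z < f y"
    by (auto simp: up_low_def down_high_def)
  with y w show False
    by (simp add: up_low_def down_high_def)
qed

theorem mainTheorem6:
  fixes X :: "'a::order set"
  assumes "finite X"
  shows "(\<forall>f. morse_function X f \<and> exclusion X f \<longrightarrow>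
            morse_matching X (assoc_matching X f) \<and>
            crit_matching X (assoc_matching X f) = crit_fun X f)
       \<and> (two_wide X \<longrightarrow> (\<forall>f. morse_function X f \<longrightarrow>
            morse_matching X (assoc_matching X f) \<and>
            crit_fun X f = crit_matching X (assoc_matching X f)))"
  using morse_matching_assoc_matching[OF assms] two_wide_exclusion[OF assms]
    crit_matching_assoc_matching
  by metis

end
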